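(* For every digraph $D$, the inverse limit $\varprojlim(D/P)_{P\in\mathcal{P}(D)}$ is a compact Hausdorff space, the map $\Phi\colon D\to\varprojlim(D/P)_{P\in\mathcal{P}(D)}$, $x\mapsto(\varphi_P(x))_{P\in\mathcal{P}(D)}$, is an embedding (a homeomorphism onto its image), and $\Phi(D)$ is dense in $\varprojlim(D/P)_{P\in\mathcal{P}(D)}$. In particular the inverse limit is a Hausdorff compactification of $D$.
   Context: Digraphs have no loops and no parallel edges. $D$ is regarded as a topological space with the 1-complex topology: each edge is a copy of $[0,1]$ glued at its endvertices; basic open sets are open stars of radius $\varepsilon$ around vertices and open subintervals of edges. A vertex set $Y$ separates vertex sets $A,B$ if every $A$–$B$ path meets $Y$ or every $B$–$A$ path meets $Y$. A finite partition $P$ of $V(D)$ is admissible if any two distinct classes of $P$ are separated by some finite vertex set; $\mathcal{P}(D)$ is the set of admissible partitions, directed by $P\le P'$ iff every class of $P'$ is contained in a class of $P$. For $P\in\mathcal{P}(D)$, $D/P$ is the finite multi-digraph with vertex set $P$ where, for distinct $p_1,p_2\in P$: if $D$ has finitely many edges from $p_1$ to $p_2$, there is one edge $(e,p_1,p_2)$ for each such edge $e$ of $D$; if infinitely many, there is a single quotient edge $(p_1p_2,p_1,p_2)$. $D/P$ carries the 1-complex topology. For $P\le P'$ the bonding map $f_{P'P}\colon D/P'\to D/P$ sends a vertex $p'$ to the class $p\supseteq p'$; an edge $(e',p_1',p_2')$ with $p_1',p_2'$ in the same class $p$ is mapped entirely to $p$; otherwise, with $p_1'\subseteq p_1$, $p_2'\subseteq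 p_2$, $p_1\ne p_2$, it is mapped pointwise (corresponding points) onto the quotient edge from $p_1$ to $p_2$ if $D/P$ has one, and otherwise onto the edge $(e',p_1,p_2)$ of $D/P$. The inverse limit $\varprojlim(D/P)_{P\in\mathcal{P}(D)}$ is the subspace of $\prod_P D/P$ of all $(x_P)_P$ with $f_{P'P}(x_{P'})=x_P$ for all $P\le P'$. $\varphi_P\colon D\to D/P$: a vertex $v$ goes to the class containing $v$; an inner point $z$ of an edge $vw$ goes to the class containing $v,w$ if they lie in the same class, and otherwise to the corresponding point on the edge of $D/P$ from the class of $v$ to the class of $w$ (the copy of $vw$, or the quotient edge). *)

theory Defs
  imports "HOL-Analysis.Analysis"
begin

text \<open>Points of a 1-complex with vertex type 'n and edge type 'e: a vertex, or an
inner point of an edge e at parameter t in (0,1) (distance t from the source of e,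
distance 1-t from the target of e).\<close>
datatype ('n,'e) cpt = CV 'n | CE 'e real

definition cstar :: "'e set \<Rightarrow> ('e \<Rightarrow> 'n) \<Rightarrow> ('e \<Rightarrow> 'n) \<Rightarrow> 'n \<Rightarrow> real \<Rightarrow> ('n,'e) cpt set" where
  "cstar Ed src tgt n eps =
     {CV n}
     \<union> {CE e t | e t. e \<in> Ed \<and> src e = n \<and> 0 < t \<and> t < 1 \<and> t < eps}
     \<union> {CE e t | e t. e \<in> Ed \<and> tgt e = n \<and> 0 < t \<and> t < 1 \<and> 1 - t < eps}"

definition complex_top :: "'n set \<Rightarrow> 'e set \<Rightarrow> ('e \<Rightarrow> 'n) \<Rightarrow> ('e \<Rightarrow> 'n) \<Rightarrow> ('n,'e) cpt topology" where
  "complex_top N Ed src tgt = topology_generated_by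
     ({cstar Ed src tgt n eps | n eps. n \<in> N \<and> 0 < eps}
      \<union> {{CE e t | t. a < t \<and> t < b} | e a b. e \<in> Ed \<and> 0 \<le> a \<and> a < b \<and> b \<le> 1})"

text \<open>A digraph is given by a vertex set V and an edge set E of ordered pairs
(so no parallel edges), with E a subset of V x V and no loops.
The topological space D: vertices CV v, inner points CE (v,w) t.\<close>
definition dtop :: "'v set \<Rightarrow> ('v \<times> 'v) set \<Rightarrow> ('v, 'v \<times> 'v) cpt topology" where
  "dtop V E = complex_top V E fst snd"

definition dpath :: "('v \<times> 'v) set \<Rightarrow> 'v list \<Rightarrow> bool" where
  "dpath E xs \<longleftrightarrow> xs \<noteq> [] \<and> distinct xs \<and> (\<forall>i. Suc i < length xs \<longrightarrow> (xs ! i, xs ! Suc i) \<in> E)"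

definition AB_path :: "('v \<times> 'v) set \<Rightarrow> 'v set \<Rightarrow> 'v set \<Rightarrow> 'v list \<Rightarrow> bool" where
  "AB_path E A B xs \<longleftrightarrow> dpath E xs \<and> hd xs \<in> A \<and> last xs \<in> B"

definition separates :: "('v \<times> 'v) set \<Rightarrow> 'v set \<Rightarrow> 'v set \<Rightarrow> 'v set \<Rightarrow> bool" where
  "separates E Y A B \<longleftrightarrow>
     (\<forall>xs. AB_path E A B xs \<longrightarrow> set xs \<inter> Y \<noteq> {}) \<or> (\<forall>xs. AB_path E B A xs \<longrightarrow> set xs \<inter> Y \<noteq> {})"

definition admissible :: "'v set \<Rightarrow> ('v \<times> 'v) set \<Rightarrow> 'v set set \<Rightarrow> bool" where
  "admissible V E P \<longleftrightarrow> finite P \<and> \<Union>P = V \<and> {} \<notin> P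
     \<and> (\<forall>p\<in>P. \<forall>q\<in>P. p \<noteq> q \<longrightarrow> p \<inter> q = {})
     \<and> (\<forall>p\<in>P. \<forall>q\<in>P. p \<noteq> q \<longrightarrow> (\<exists>Y. finite Y \<and> Y \<subseteq> V \<and> separates E Y p q))"

definition adm_parts :: "'v set \<Rightarrow> ('v \<times> 'v) set \<Rightarrow> 'v set set set" where
  "adm_parts V E = {P. admissible V E P}"

definition refines_le :: "'v set set \<Rightarrow> 'v set set \<Rightarrow> bool" where
  "refines_le P P' \<longleftrightarrow> (\<forall>p'\<in>P'. \<exists>p\<in>P. p' \<subseteq> p)"

datatype 'v qedge = OrigE "'v \<times> 'v" | QuotE "'v set" "'v set"

definition cls :: "'v set set \<Rightarrow> 'v \<Rightarrow> 'v set" where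
  "cls P v = (THE p. p \<in> P \<and> v \<in> p)"

definition edges_between :: "('v \<times> 'v) set \<Rightarrow> 'v set \<Rightarrow> 'v set \<Rightarrow> ('v \<times> 'v) set" where
  "edges_between E p q = {e \<in> E. fst e \<in> p \<and> snd e \<in> q}"

definition qedges :: "('v \<times> 'v) set \<Rightarrow> 'v set set \<Rightarrow> 'v qedge set" where
  "qedges E P =
     {OrigE e | e. e \<in> E \<and> cls P (fst e) \<noteq> cls P (snd e)
                 \<and> finite (edges_between E (cls P (fst e)) (cls P (snd e)))}
     \<union> {QuotE p q | p q. p \<in> P \<and> q \<in> P \<and> p \<noteq> q \<and> infinite (edges_between E p q)}"

fun qsrc :: "'v set set \<Rightarrow> 'v qedge \<Rightarrow> 'v set" where
  "qsrc P (OrigE e) = cls P (fst e)"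
| "qsrc P (QuotE p q) = p"

fun qtgt :: "'v set set \<Rightarrow> 'v qedge \<Rightarrow> 'v set" where
  "qtgt P (OrigE e) = cls P (snd e)"
| "qtgt P (QuotE p q) = q"

definition quot_top :: "('v \<times> 'v) set \<Rightarrow> 'v set set \<Rightarrow> ('v set, 'v qedge) cpt topology" where
  "quot_top E P = complex_top P (qedges E P) (qsrc P) (qtgt P)"

definition up :: "'v set set \<Rightarrow> 'v set \<Rightarrow> 'v set" where
  "up P p' = (THE p. p \<in> P \<and> p' \<subseteq> p)"

text \<open>bond E P' P is the bonding map D/P' \<rightarrow> D/P for P \<le> P'.\<close>
fun bond :: "('v \<times> 'v) set \<Rightarrow> 'v set set \<Rightarrow> 'v set set \<Rightarrow> ('v set, 'v qedge) cpt \<Rightarrow> ('v set, 'v qedge) cpt" where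
  "bond E P' P (CV p') = CV (up P p')"
| "bond E P' P (CE e' t) =
     (let p1 = up P (qsrc P' e'); p2 = up P (qtgt P' e') in
      if p1 = p2 then CV p1
      else if QuotE p1 p2 \<in> qedges E P then CE (QuotE p1 p2) t
      else CE e' t)"

fun phi :: "('v \<times> 'v) set \<Rightarrow> 'v set set \<Rightarrow> ('v, 'v \<times> 'v) cpt \<Rightarrow> ('v set, 'v qedge) cpt" where
  "phi E P (CV v) = CV (cls P v)"
| "phi E P (CE e t) =
     (let p1 = cls P (fst e); p2 = cls P (snd e) in
      if p1 = p2 then CV p1
      else if QuotE p1 p2 \<in> qedges E P then CE (QuotE p1 p2) t
      else CE (OrigE e) t)"

definition invlim_top :: "'v set \<Rightarrow> ('v \<times> 'v) set \<Rightarrow> ('v set set \<Rightarrow> ('v set, 'v qedge) cpt) topology" where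
  "invlim_top V E =
     subtopology (product_topology (quot_top E) (adm_parts V E))
       {x. \<forall>P\<in>adm_parts V E. \<forall>P'\<in>adm_parts V E. refines_le P P' \<longrightarrow> bond E P' P (x P') = x P}"

definition Phi :: "'v set \<Rightarrow> ('v \<times> 'v) set \<Rightarrow> ('v, 'v \<times> 'v) cpt \<Rightarrow> ('v set set \<Rightarrow> ('v set, 'v qedge) cpt)" where
  "Phi V E x = (\<lambda>P\<in>adm_parts V E. phi E P x)"

end

theory Submission
  imports Defs
begin

text \<open>Every D/P is a finite 1-complex, hence compact Hausdorff, and the bonding maps and the
  maps \<open>\<phi>\<^sub>P\<close> are cellular, hence continuous. The threads of the inverse system form a closed
  subset of the product of the D/P, so the inverse limit is compact Hausdorff.

  \<open>\<Phi>\<close> is injective because two points of D are already distinguished in D/P for the partition P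
  of V into the singletons of their endpoints and the rest. It is open onto its image because every
  subbasic open set of D, a star around v or an open interval of an edge e, is the preimage of a
  star or an interval in D/P for the partition isolating v, respectively the ends of e.

  For density, a basic open set of the product restricts only finitely many coordinates. The
  admissible partitions are directed by common refinement, so one P refines all of them; as
  \<open>\<phi>\<^sub>P\<close> is onto, some point of D has the same P-coordinate as a given thread, and then,
  via the bonding maps, the same coordinates at all the restricted indices.\<close>

section \<open>1-complexes\<close>

definition complex_subbasis :: "'n set \<Rightarrow> 'e set \<Rightarrow> ('e \<Rightarrow> 'n) \<Rightarrow> ('e \<Rightarrow> 'n) \<Rightarrow> ('n,'e) cpt set set" where
  "complex_subbasis N Ed s t =
     {cstar Ed s t n eps | n eps. n \<in> N \<and> 0 < eps}
     \<union> {{CE e x | x. a < x \<and> x < b} | e a b. e \<in> Ed \<and> 0 \<le> a \<and> a < b \<and> b \<le> 1}"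

lemma complex_top_eq: "complex_top N Ed s t = topology_generated_by (complex_subbasis N Ed s t)"
  by (simp add: complex_top_def complex_subbasis_def)

lemma CV_in_cstar [simp]: "CV m \<in> cstar Ed s t n eps \<longleftrightarrow> m = n"
  by (auto simp: cstar_def)

lemma CE_in_cstar [simp]:
  "CE e x \<in> cstar Ed s t n eps \<longleftrightarrow>
     e \<in> Ed \<and> 0 < x \<and> x < 1 \<and> (s e = n \<and> x < eps \<or> t e = n \<and> 1 - x < eps)"
  by (auto simp: cstar_def)

lemma openin_cstar: "n \<in> N \<Longrightarrow> 0 < eps \<Longrightarrow> openin (complex_top N Ed s t) (cstar Ed s t n eps)"
  unfolding complex_top_eq by (rule topology_generated_by_Basis) (auto simp: complex_subbasis_def)

lemma openin_edge_interval:
  "e \<in> Ed \<Longrightarrow> 0 \<le> a \<Longrightarrow> a < b \<Longrightarrow> b \<le> 1 \<Longrightarrow>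
     openin (complex_top N Ed s t) {CE e x | x. a < x \<and> x < b}"
  unfolding complex_top_eq by (rule topology_generated_by_Basis) (auto simp: complex_subbasis_def)

lemma topspace_complex_top:
  "topspace (complex_top N Ed s t) = CV ` N \<union> {CE e x | e x. e \<in> Ed \<and> 0 < x \<and> x < 1}"
proof
  show "topspace (complex_top N Ed s t) \<subseteq> CV ` N \<union> {CE e x | e x. e \<in> Ed \<and> 0 < x \<and> x < 1}"
    unfolding complex_top_eq topology_generated_by_topspace complex_subbasis_def
    by (auto simp: cstar_def)
  have "CV n \<in> topspace (complex_top N Ed s t)" if "n \<in> N" for n
    using openin_subset[OF openin_cstar[OF that zero_less_one, of Ed s t]] by auto
  moreover have "CE e x \<in> topspace (complex_top N Ed s t)" if "e \<in> Ed" "0 < x" "x < 1" for e x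
    using openin_subset[OF openin_edge_interval[OF \<open>e \<in> Ed\<close>, of 0 1 N s t]] that by auto
  ultimately show "CV ` N \<union> {CE e x | e x. e \<in> Ed \<and> 0 < x \<and> x < 1} \<subseteq> topspace (complex_top N Ed s t)"
    by auto
qed

lemma CV_in_topspace_complex_top [simp]: "CV n \<in> topspace (complex_top N Ed s t) \<longleftrightarrow> n \<in> N"
  by (auto simp: topspace_complex_top)

lemma CE_in_topspace_complex_top [simp]:
  "CE e x \<in> topspace (complex_top N Ed s t) \<longleftrightarrow> e \<in> Ed \<and> 0 < x \<and> x < 1"
  by (auto simp: topspace_complex_top)

lemma separate_vertices_complex_top:
  assumes "n \<in> N" "m \<in> N" "n \<noteq> m"
  shows "\<exists>U W. openin (complex_top N Ed s t) U \<and> openin (complex_top N Ed s t) W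
           \<and> CV n \<in> U \<and> CV m \<in> W \<and> disjnt U W"
proof -
  have "disjnt (cstar Ed s t n (1/2)) (cstar Ed s t m (1/2))"
    unfolding disjnt_iff
  proof
    fix y show "\<not> (y \<in> cstar Ed s t n (1/2) \<and> y \<in> cstar Ed s t m (1/2))"
      using \<open>n \<noteq> m\<close> by (cases y) auto
  qed
  then show ?thesis
    using assms by (intro exI[of _ "cstar Ed s t n (1/2)"] exI[of _ "cstar Ed s t m (1/2)"]) (auto simp: openin_cstar)
qed

lemma separate_vertex_edge_complex_top:
  assumes "n \<in> N" "e \<in> Ed" "0 < x" "x < 1"
  shows "\<exists>U W. openin (complex_top N Ed s t) U \<and> openin (complex_top N Ed s t) W
           \<and> CV n \<in> U \<and> CE e x \<in> W \<and> disjnt U W"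
proof -
  define d where "d = min x (1 - x) / 2"
  have "0 < d" "d < x" "x < 1 - d" using assms by (auto simp: d_def min_def field_simps)
  then show ?thesis
    using assms by (intro exI[of _ "cstar Ed s t n d"] exI[of _ "{CE e u | u. d < u \<and> u < 1 - d}"])
       (auto simp: openin_cstar openin_edge_interval disjnt_def)
qed

lemma separate_edge_points_complex_top:
  assumes "e \<in> Ed" "0 < x" "x < 1" "e' \<in> Ed" "0 < x'" "x' < 1" "x < x' \<or> e \<noteq> e'"
  shows "\<exists>U W. openin (complex_top N Ed s t) U \<and> openin (complex_top N Ed s t) W
           \<and> CE e x \<in> U \<and> CE e' x' \<in> W \<and> disjnt U W"
proof (cases "e = e'")
  case True
  define m where "m = (x + x') / 2"
  have "x < m" "m < x'" using assms True by (auto simp: m_def)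
  then show ?thesis
    using assms True by (intro exI[of _ "{CE e u | u. 0 < u \<and> u < m}"] exI[of _ "{CE e u | u. m < u \<and> u < 1}"])
       (auto simp: openin_edge_interval disjnt_def)
next
  case False
  then show ?thesis
    using assms by (intro exI[of _ "{CE e u | u. 0 < u \<and> u < 1}"] exI[of _ "{CE e' u | u. 0 < u \<and> u < 1}"])
       (auto simp: openin_edge_interval disjnt_def)
qed

lemma Hausdorff_space_complex_top: "Hausdorff_space (complex_top N Ed s t)"
  unfolding Hausdorff_space_def
proof (intro allI impI, elim conjE)
  let ?X = "complex_top N Ed s t"
  have swap: "\<exists>U W. openin ?X U \<and> openin ?X W \<and> y \<in> U \<and> z \<in> W \<and> disjnt U W"
    if "\<exists>U W. openin ?X U \<and> openin ?X W \<and> z \<in> U \<and> y \<in> W \<and> disjnt U W" for y z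
    using that disjnt_sym by blast
  fix y z assume y: "y \<in> topspace ?X" and z: "z \<in> topspace ?X" and "y \<noteq> z"
  show "\<exists>U W. openin ?X U \<and> openin ?X W \<and> y \<in> U \<and> z \<in> W \<and> disjnt U W"
  proof (cases y; cases z)
    fix n m assume yz: "y = CV n" "z = CV m"
    then show ?thesis
      using y z \<open>y \<noteq> z\<close> unfolding yz by (intro separate_vertices_complex_top) auto
  next
    fix n e x assume yz: "y = CV n" "z = CE e x"
    then show ?thesis
      using y z unfolding yz by (intro separate_vertex_edge_complex_top) auto
  next
    fix e x n assume yz: "y = CE e x" "z = CV n"
    then have "n \<in> N" "e \<in> Ed" "0 < x" "x < 1" using y z by auto
    then show ?thesis unfolding yz by (rule swap[OF separate_vertex_edge_complex_top])
  next
    fix e x e' x' assume yz: "y = CE e x" "z = CE e' x'"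
    show ?thesis
    proof (cases "x < x' \<or> e \<noteq> e'")
      case True
      then show ?thesis
        using y z unfolding yz by (intro separate_edge_points_complex_top) auto
    next
      case False
      then have "x' < x" using \<open>y \<noteq> z\<close> yz by auto
      moreover have "e' \<in> Ed" "0 < x'" "x' < 1" "e \<in> Ed" "0 < x" "x < 1" using y z yz by auto
      ultimately show ?thesis unfolding yz by (intro swap[OF separate_edge_points_complex_top]) auto
    qed
  qed
qed

lemma continuous_map_into_complex_top:
  assumes "f ` topspace X \<subseteq> topspace (complex_top N Ed s t)"
    and "\<And>n eps. n \<in> N \<Longrightarrow> 0 < eps \<Longrightarrow> openin X {x \<in> topspace X. f x \<in> cstar Ed s t n eps}"
    and "\<And>e a b. e \<in> Ed \<Longrightarrow> 0 \<le> a \<Longrightarrow> a < b \<Longrightarrow> b \<le> 1 \<Longrightarrow>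
           openin X {x \<in> topspace X. f x \<in> {CE e u | u. a < u \<and> u < b}}"
  shows "continuous_map X (complex_top N Ed s t) f"
  unfolding complex_top_eq
proof (rule continuous_on_generated_topo)
  fix U assume "U \<in> complex_subbasis N Ed s t"
  moreover have "f -` U \<inter> topspace X = {x \<in> topspace X. f x \<in> U}" by auto
  ultimately show "openin X (f -` U \<inter> topspace X)"
    unfolding complex_subbasis_def using assms(2,3) by auto
next
  show "f ` topspace X \<subseteq> \<Union> (complex_subbasis N Ed s t)"
    using assms(1) by (simp add: complex_top_eq)
qed

definition closed_edge :: "('e \<Rightarrow> 'n) \<Rightarrow> ('e \<Rightarrow> 'n) \<Rightarrow> 'e \<Rightarrow> real \<Rightarrow> ('n, 'e) cpt" where
  "closed_edge s t e x = (if x \<le> 0 then CV (s e) else if 1 \<le> x then CV (t e) else CE e x)"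

lemma continuous_map_closed_edge:
  assumes e: "e \<in> Ed" "s e \<in> N" "t e \<in> N"
  shows "continuous_map (top_of_set {0..1}) (complex_top N Ed s t) (closed_edge s t e)"
proof (rule continuous_map_into_complex_top)
  show "closed_edge s t e ` topspace (top_of_set {0..1}) \<subseteq> topspace (complex_top N Ed s t)"
    using e by (auto simp: closed_edge_def)
next
  fix n and eps :: real assume "0 < eps"
  define T where "T = (if s e = n then {..<min eps 1} else {}) \<union> (if t e = n then {max (1 - eps) 0<..} else {})"
  have "{x \<in> topspace (top_of_set {0..1}). closed_edge s t e x \<in> cstar Ed s t n eps} = {0..1} \<inter> T"
    (is "?L = _")
  proof (rule set_eqI)
    fix x show "x \<in> ?L \<longleftrightarrow> x \<in> {0..1} \<inter> T"
      using e \<open>0 < eps\<close> by (auto simp: closed_edge_def T_def)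
  qed
  moreover have "open T" by (auto simp: T_def intro!: open_Un)
  ultimately show "openin (top_of_set {0..1}) {x \<in> topspace (top_of_set {0..1}). closed_edge s t e x \<in> cstar Ed s t n eps}"
    by auto
next
  fix e' and a b :: real assume "0 \<le> a" "b \<le> 1"
  define T where "T = (if e' = e then {a<..<b} else {})"
  have "{x \<in> topspace (top_of_set {0..1}). closed_edge s t e x \<in> {CE e' u | u. a < u \<and> u < b}} = {0..1} \<inter> T"
    (is "?L = _")
  proof (rule set_eqI)
    fix x show "x \<in> ?L \<longleftrightarrow> x \<in> {0..1} \<inter> T"
      using \<open>0 \<le> a\<close> \<open>b \<le> 1\<close> by (auto simp: closed_edge_def T_def)
  qed
  moreover have "open T" by (simp add: T_def)
  ultimately show "openin (top_of_set {0..1})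
      {x \<in> topspace (top_of_set {0..1}). closed_edge s t e x \<in> {CE e' u | u. a < u \<and> u < b}}"
    by auto
qed

lemma compact_space_complex_top:
  assumes "finite N" "finite Ed" and ends: "\<And>e. e \<in> Ed \<Longrightarrow> s e \<in> N \<and> t e \<in> N"
  shows "compact_space (complex_top N Ed s t)"
proof -
  let ?X = "complex_top N Ed s t"
  let ?K = "(\<Union>e\<in>Ed. closed_edge s t e ` {0..1}) \<union> (\<Union>n\<in>N. {CV n})"
  have "compactin ?X (closed_edge s t e ` {0..1})" if "e \<in> Ed" for e
    using continuous_map_closed_edge[OF that] ends[OF that]
    by (intro image_compactin[of "top_of_set {0..1}"]) (auto simp: compactin_subtopology)
  then have "compactin ?X ?K"
    using assms(1,2) by (intro compactin_Un compactin_Union) auto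
  moreover have "topspace ?X \<subseteq> ?K"
  proof
    fix y assume "y \<in> topspace ?X"
    then consider n where "y = CV n" "n \<in> N" | e x where "y = CE e x" "e \<in> Ed" "0 < x" "x < 1"
      by (auto simp: topspace_complex_top)
    then show "y \<in> ?K"
    proof cases
      case (2 e x)
      then have "y = closed_edge s t e x" "x \<in> {0..1}" by (auto simp: closed_edge_def)
      then show ?thesis using \<open>e \<in> Ed\<close> by blast
    qed auto
  qed
  ultimately show ?thesis
    unfolding compact_space_def by (metis compactin_subset_topspace subset_antisym)
qed

context
  fixes N :: "'n set" and Ed :: "'e set" and s t :: "'e \<Rightarrow> 'n"
    and N' :: "'m set" and Ed' :: "'d set" and s' t' :: "'d \<Rightarrow> 'm"
    and fv :: "'n \<Rightarrow> 'm" and g :: "'e \<Rightarrow> 'd" and f :: "('n, 'e) cpt \<Rightarrow> ('m, 'd) cpt"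
  assumes vertex_map: "\<And>n. n \<in> N \<Longrightarrow> fv n \<in> N'"
    and ends: "\<And>e. e \<in> Ed \<Longrightarrow> s e \<in> N \<and> t e \<in> N"
    and edge_map: "\<And>e. e \<in> Ed \<Longrightarrow> fv (s e) \<noteq> fv (t e) \<Longrightarrow>
                     g e \<in> Ed' \<and> s' (g e) = fv (s e) \<and> t' (g e) = fv (t e)"
    and f_CV: "\<And>n. n \<in> N \<Longrightarrow> f (CV n) = CV (fv n)"
    and f_CE: "\<And>e x. e \<in> Ed \<Longrightarrow> 0 < x \<Longrightarrow> x < 1 \<Longrightarrow>
                 f (CE e x) = (if fv (s e) = fv (t e) then CV (fv (s e)) else CE (g e) x)"
begin

lemma cellular_preimage_cstar:
  assumes "0 < eps"
  shows "{y \<in> topspace (complex_top N Ed s t). f y \<in> cstar Ed' s' t' n' eps}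
       = (\<Union>n\<in>{n\<in>N. fv n = n'}. cstar Ed s t n eps)
         \<union> (\<Union>e\<in>{e\<in>Ed. fv (s e) = fv (t e) \<and> fv (s e) = n'}. {CE e x | x. 0 < x \<and> x < 1})"
    (is "?L = ?R")
proof (rule set_eqI)
  fix y
  show "y \<in> ?L \<longleftrightarrow> y \<in> ?R"
  proof (cases y)
    case (CE e x)
    show ?thesis
    proof (cases "e \<in> Ed \<and> 0 < x \<and> x < 1")
      case True
      then show ?thesis
        using CE f_CE ends[of e] edge_map[of e] by (cases "fv (s e) = fv (t e)") auto
    qed (use CE in auto)
  qed (use f_CV in auto)
qed

lemma cellular_preimage_edge_interval:
  assumes "0 \<le> a" "b \<le> 1"
  shows "{y \<in> topspace (complex_top N Ed s t). f y \<in> {CE e' x | x. a < x \<and> x < b}}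
       = (\<Union>e\<in>{e\<in>Ed. fv (s e) \<noteq> fv (t e) \<and> g e = e'}. {CE e x | x. a < x \<and> x < b})"
    (is "?L = ?R")
proof (rule set_eqI)
  fix y
  show "y \<in> ?L \<longleftrightarrow> y \<in> ?R"
  proof (cases y)
    case (CE e x)
    show ?thesis
    proof (cases "e \<in> Ed \<and> 0 < x \<and> x < 1")
      case True
      then show ?thesis using CE f_CE by (cases "fv (s e) = fv (t e)") auto
    qed (use CE assms in auto)
  qed (use f_CV in auto)
qed

lemma continuous_map_complex_top_cellular:
  "continuous_map (complex_top N Ed s t) (complex_top N' Ed' s' t') f"
proof (rule continuous_map_into_complex_top)
  show "f ` topspace (complex_top N Ed s t) \<subseteq> topspace (complex_top N' Ed' s' t')"
  proof
    fix z assume "z \<in> f ` topspace (complex_top N Ed s t)"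
    then obtain y where "y \<in> topspace (complex_top N Ed s t)" "z = f y" by blast
    then show "z \<in> topspace (complex_top N' Ed' s' t')"
      using vertex_map ends f_CV f_CE edge_map by (cases y) auto
  qed
next
  fix n' and eps :: real assume "0 < eps"
  show "openin (complex_top N Ed s t) {y \<in> topspace (complex_top N Ed s t). f y \<in> cstar Ed' s' t' n' eps}"
    unfolding cellular_preimage_cstar[OF \<open>0 < eps\<close>] using \<open>0 < eps\<close>
    by (intro openin_Un openin_Union) (auto intro!: openin_cstar openin_edge_interval)
next
  fix e' and a b :: real assume "0 \<le> a" "a < b" "b \<le> 1"
  then show "openin (complex_top N Ed s t)
      {y \<in> topspace (complex_top N Ed s t). f y \<in> {CE e' x | x. a < x \<and> x < b}}"
    unfolding cellular_preimage_edge_interval[OF \<open>0 \<le> a\<close> \<open>b \<le> 1\<close>]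
    by (intro openin_Union) (auto intro!: openin_edge_interval)
qed

end


section \<open>Inverse limits\<close>

text \<open>\<open>f j i\<close> is the bonding map from the j-th to the i-th space, for \<open>le i j\<close>.\<close>
definition threads :: "'i set \<Rightarrow> ('i \<Rightarrow> 'i \<Rightarrow> bool) \<Rightarrow> ('i \<Rightarrow> 'i \<Rightarrow> 'a \<Rightarrow> 'a) \<Rightarrow> ('i \<Rightarrow> 'a) set" where
  "threads I le f = {x. \<forall>i\<in>I. \<forall>j\<in>I. le i j \<longrightarrow> f j i (x j) = x i}"

lemma closedin_threads:
  assumes "\<And>i. i \<in> I \<Longrightarrow> Hausdorff_space (X i)"
    and "\<And>i j. i \<in> I \<Longrightarrow> j \<in> I \<Longrightarrow> le i j \<Longrightarrow> continuous_map (X j) (X i) (f j i)"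
  shows "closedin (product_topology X I) (topspace (product_topology X I) \<inter> threads I le f)"
proof -
  let ?P = "product_topology X I"
  define K where "K = {{x \<in> topspace ?P. f j i (x j) = x i} | i j. i \<in> I \<and> j \<in> I \<and> le i j}"
  have "closedin ?P S" if "S \<in> K" for S
  proof -
    obtain i j where ij: "i \<in> I" "j \<in> I" "le i j" and S: "S = {x \<in> topspace ?P. f j i (x j) = x i}"
      using \<open>S \<in> K\<close> unfolding K_def by blast
    have "continuous_map ?P (X i) (f j i \<circ> (\<lambda>x. x j))"
      using continuous_map_product_projection[OF \<open>j \<in> I\<close>] assms(2)[OF ij]
      by (rule continuous_map_compose)
    then have "continuous_map ?P (X i) (\<lambda>x. f j i (x j))"
      by (simp add: o_def)
    moreover have "continuous_map ?P (X i) (\<lambda>x. x i)"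
      using \<open>i \<in> I\<close> by (rule continuous_map_product_projection)
    ultimately show ?thesis
      unfolding S by (rule closedin_continuous_maps_eq[OF assms(1)[OF \<open>i \<in> I\<close>]])
  qed
  then have "closedin ?P (\<Inter> (insert (topspace ?P) K))"
    using closedin_topspace[of ?P] by (intro closedin_Inter) auto
  moreover have "topspace ?P \<inter> threads I le f = \<Inter> (insert (topspace ?P) K)"
    unfolding threads_def K_def by auto
  ultimately show ?thesis by simp
qed

lemma compact_space_inverse_limit:
  assumes "\<And>i. i \<in> I \<Longrightarrow> compact_space (X i)" "\<And>i. i \<in> I \<Longrightarrow> Hausdorff_space (X i)"
    and "\<And>i j. i \<in> I \<Longrightarrow> j \<in> I \<Longrightarrow> le i j \<Longrightarrow> continuous_map (X j) (X i) (f j i)"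
  shows "compact_space (subtopology (product_topology X I) (threads I le f))"
proof -
  have "compact_space (product_topology X I)"
    using assms(1) by (auto simp: compact_space_product_topology)
  then have "compactin (product_topology X I) (topspace (product_topology X I) \<inter> threads I le f)"
    using closedin_threads[OF assms(2,3)] by (rule closedin_compact_space)
  then show ?thesis
    by (metis compact_space_subtopology subtopology_restrict)
qed

lemma restrict_in_threads:
  assumes "\<And>i j. i \<in> I \<Longrightarrow> j \<in> I \<Longrightarrow> le i j \<Longrightarrow> f j i (g j z) = g i z"
  shows "(\<lambda>i\<in>I. g i z) \<in> threads I le f"
  using assms by (simp add: threads_def)

lemma open_map_onto_image_generated:
  assumes D: "D = topology_generated_by B" and inj: "inj_on G (topspace D)"
    and subbasic: "\<And>U. U \<in> B \<Longrightarrow> openin (subtopology Y (G ` topspace D)) (G ` U)"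
  shows "open_map D (subtopology Y (G ` topspace D)) G"
  unfolding open_map_def
proof (intro allI impI)
  fix U assume "openin D U"
  then have "generate_topology_on B U"
    using D by (simp add: openin_topology_generated_by_iff)
  then show "openin (subtopology Y (G ` topspace D)) (G ` U)"
  proof (induction rule: generate_topology_on.induct)
    case (Int a b)
    have "openin D a" "openin D b"
      using Int.hyps by (simp_all add: D openin_topology_generated_by_iff)
    then have "G ` (a \<inter> b) = G ` a \<inter> G ` b"
      using inj by (intro inj_on_image_Int) (auto dest: openin_subset)
    then show ?case using Int.IH by (metis openin_Int)
  next
    case (UN K)
    then show ?case by (auto simp: image_Union intro!: openin_Union)
  qed (simp_all add: subbasic)
qed

lemma embedding_map_into_product_topology:
  assumes D: "D = topology_generated_by B"
    and cont: "\<And>i. i \<in> I \<Longrightarrow> continuous_map D (X i) (g i)"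
    and inj: "inj_on (\<lambda>z. \<lambda>i\<in>I. g i z) (topspace D)"
    and initial: "\<And>U. U \<in> B \<Longrightarrow> \<exists>i\<in>I. \<exists>W. openin (X i) W \<and> U = {z \<in> topspace D. g i z \<in> W}"
  shows "embedding_map D (product_topology X I) (\<lambda>z. \<lambda>i\<in>I. g i z)"
proof -
  let ?G = "\<lambda>z. \<lambda>i\<in>I. g i z"
  let ?S = "?G ` topspace D"
  let ?P = "product_topology X I"
  have cont_G: "continuous_map D ?P ?G"
    unfolding continuous_map_componentwise
  proof (intro conjI ballI)
    show "?G ` topspace D \<subseteq> extensional I" by auto
    fix i assume "i \<in> I"
    then show "continuous_map D (X i) (\<lambda>z. ?G z i)"
      using cont[OF \<open>i \<in> I\<close>] by (simp add: continuous_map_eq)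
  qed
  have "openin (subtopology ?P ?S) (?G ` U)" if "U \<in> B" for U
  proof -
    obtain i W where "i \<in> I" "openin (X i) W" and U: "U = {z \<in> topspace D. g i z \<in> W}"
      using initial[OF \<open>U \<in> B\<close>] by blast
    have "?G ` U = {y \<in> topspace ?P. y i \<in> W} \<inter> ?S"
    proof
      show "?G ` U \<subseteq> {y \<in> topspace ?P. y i \<in> W} \<inter> ?S"
        using U \<open>i \<in> I\<close> continuous_map_image_subset_topspace[OF cont_G] by fastforce
      show "{y \<in> topspace ?P. y i \<in> W} \<inter> ?S \<subseteq> ?G ` U"
      proof
        fix y assume "y \<in> {y \<in> topspace ?P. y i \<in> W} \<inter> ?S"
        then obtain z where "z \<in> topspace D" "y = ?G z" "y i \<in> W" by blast
        then show "y \<in> ?G ` U" using U \<open>i \<in> I\<close> by simp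
      qed
    qed
    moreover have "openin ?P {y \<in> topspace ?P. y i \<in> W}"
      using \<open>openin (X i) W\<close> \<open>i \<in> I\<close>
      by (intro openin_continuous_map_preimage[OF continuous_map_product_projection])
    ultimately show ?thesis
      by (simp only:) (rule openin_subtopology_Int)
  qed
  then have "open_map D (subtopology ?P ?S) ?G"
    by (rule open_map_onto_image_generated[OF D inj])
  moreover have "continuous_map D (subtopology ?P ?S) ?G"
    using cont_G unfolding continuous_map_in_subtopology by blast
  ultimately have "embedding_map D (subtopology ?P ?S) ?G"
    using injective_open_imp_embedding_map[OF _ _ inj] by blast
  then show ?thesis
    unfolding embedding_map_in_subtopology by (rule conjunct1)
qed

lemma dense_image_in_inverse_limit:
  assumes directed: "\<And>J. finite J \<Longrightarrow> J \<subseteq> I \<Longrightarrow> \<exists>k\<in>I. \<forall>i\<in>J. le i k"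
    and compat: "\<And>i j z. i \<in> I \<Longrightarrow> j \<in> I \<Longrightarrow> le i j \<Longrightarrow> z \<in> S \<Longrightarrow> f j i (g j z) = g i z"
    and onto: "\<And>i. i \<in> I \<Longrightarrow> g i ` S = topspace (X i)"
  shows "subtopology (product_topology X I) (threads I le f) closure_of ((\<lambda>z. \<lambda>i\<in>I. g i z) ` S)
       = topspace (subtopology (product_topology X I) (threads I le f))"
  unfolding dense_intersects_open
proof (intro allI impI, elim conjE)
  let ?P = "product_topology X I"
  fix T assume "openin (subtopology ?P (threads I le f)) T" "T \<noteq> {}"
  then obtain T' x where T': "openin ?P T'" "T = T' \<inter> threads I le f" and x: "x \<in> T"
    by (auto simp: openin_subtopology)
  obtain U where U: "x \<in> (\<Pi>\<^sub>E i\<in>I. U i)" "\<And>i. openin (X i) (U i)"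
      "finite {i. U i \<noteq> topspace (X i)}" "(\<Pi>\<^sub>E i\<in>I. U i) \<subseteq> T'"
    using product_topology_open_contains_basis[OF T'(1)] x T'(2) by blast
  let ?J = "{i \<in> I. U i \<noteq> topspace (X i)}"
  obtain k where k: "k \<in> I" "\<And>i. i \<in> ?J \<Longrightarrow> le i k"
    using directed[of ?J] U(3) by (auto intro: rev_finite_subset)
  have "x k \<in> topspace (X k)" using U(1,2) k(1) openin_subset by (fastforce simp: PiE_iff)
  then obtain z where z: "z \<in> S" "g k z = x k" using onto[OF k(1)] by (metis imageE)
  have "g i z \<in> U i" if "i \<in> I" for i
  proof (cases "i \<in> ?J")
    case True
    then have "g i z = f k i (x k)" using compat[OF that k(1) k(2) z(1)] z(2) by simp
    also have "\<dots> = x i" using x T'(2) that k True by (auto simp: threads_def)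
    finally show ?thesis using U(1) that by (auto simp: PiE_iff)
  next
    case False
    then show ?thesis using onto[OF that] z(1) that by auto
  qed
  then have "(\<lambda>i\<in>I. g i z) \<in> T"
    using U(4) T'(2) restrict_in_threads[of I le f g z] compat z(1) by (auto simp: PiE_iff)
  then show "(\<lambda>z. \<lambda>i\<in>I. g i z) ` S \<inter> T \<noteq> {}" using z(1) by blast
qed


section \<open>Admissible partitions\<close>

lemma admissible_finite: "admissible V E P \<Longrightarrow> finite P"
  and admissible_Union: "admissible V E P \<Longrightarrow> \<Union>P = V"
  and admissible_nonempty: "admissible V E P \<Longrightarrow> {} \<notin> P"
  and admissible_separates:
    "admissible V E P \<Longrightarrow> p \<in> P \<Longrightarrow> q \<in> P \<Longrightarrow> p \<noteq> q \<Longrightarrow> \<exists>Y. finite Y \<and> Y \<subseteq> V \<and> separates E Y p q"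
  by (simp_all add: admissible_def)

lemma admissible_disjoint:
  "admissible V E P \<Longrightarrow> p \<in> P \<Longrightarrow> q \<in> P \<Longrightarrow> v \<in> p \<Longrightarrow> v \<in> q \<Longrightarrow> p = q"
  unfolding admissible_def by blast

lemma admissible_cls_eq:
  assumes "admissible V E P" "p \<in> P" "v \<in> p"
  shows "cls P v = p"
  unfolding cls_def using assms by (intro the_equality) (auto dest: admissible_disjoint)

lemma admissible_cls:
  assumes "admissible V E P" "v \<in> V"
  shows "cls P v \<in> P" "v \<in> cls P v"
proof -
  obtain p where "p \<in> P" "v \<in> p" using assms admissible_Union by blast
  then show "cls P v \<in> P" "v \<in> cls P v" using admissible_cls_eq[OF assms(1)] by auto
qed

lemma admissible_up:
  assumes "admissible V E P" "admissible V E P'" "refines_le P P'" "p' \<in> P'"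
  shows "up P p' \<in> P" "p' \<subseteq> up P p'"
proof -
  obtain p where p: "p \<in> P" "p' \<subseteq> p" using assms(3,4) unfolding refines_le_def by blast
  obtain v where "v \<in> p'" using admissible_nonempty[OF assms(2)] assms(4) by (metis ex_in_conv)
  then have "up P p' = p"
    unfolding up_def using p by (intro the_equality) (auto dest: admissible_disjoint[OF assms(1)])
  then show "up P p' \<in> P" "p' \<subseteq> up P p'" using p by auto
qed

lemma up_cls:
  assumes "admissible V E P" "admissible V E P'" "refines_le P P'" "v \<in> V"
  shows "up P (cls P' v) = cls P v"
proof -
  have "cls P' v \<in> P'" "v \<in> cls P' v" using admissible_cls[OF assms(2,4)] by auto
  then show ?thesis
    using admissible_up[OF assms(1-3)] admissible_cls_eq[OF assms(1)] by (metis subsetD)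
qed

lemma cls_refines:
  assumes "admissible V E P" "admissible V E P'" "refines_le P P'" "v \<in> V"
  shows "cls P' v \<subseteq> cls P v"
  using admissible_up(2)[OF assms(1-3) admissible_cls(1)[OF assms(2,4)]] up_cls[OF assms] by simp

lemma separates_mono: "separates E Y A B \<Longrightarrow> A' \<subseteq> A \<Longrightarrow> B' \<subseteq> B \<Longrightarrow> separates E Y A' B'"
  unfolding separates_def AB_path_def by blast

definition fin_part :: "'v set \<Rightarrow> 'v set \<Rightarrow> 'v set set" where
  "fin_part V F = (\<lambda>u. {u}) ` F \<union> (if V - F = {} then {} else {V - F})"

definition meet_part :: "'v set set \<Rightarrow> 'v set set \<Rightarrow> 'v set set" where
  "meet_part P Q = {p \<inter> q | p q. p \<in> P \<and> q \<in> Q \<and> p \<inter> q \<noteq> {}}"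

lemma admissible_fin_part:
  assumes "finite F" "F \<subseteq> V"
  shows "admissible V E (fin_part V F)"
  unfolding admissible_def
proof (intro conjI ballI impI)
  show "finite (fin_part V F)" "\<Union> (fin_part V F) = V" "{} \<notin> fin_part V F"
    using assms by (auto simp: fin_part_def)
  fix p q assume pq: "p \<in> fin_part V F" "q \<in> fin_part V F" "p \<noteq> q"
  then show "p \<inter> q = {}" by (auto simp: fin_part_def split: if_splits)
  text \<open>One of two distinct classes is a singleton in F, so F separates them.\<close>
  have "p \<subseteq> F \<or> q \<subseteq> F" using pq by (auto simp: fin_part_def split: if_splits)
  then have "separates E F p q"
  proof
    assume "p \<subseteq> F"
    then show ?thesis unfolding separates_def AB_path_def dpath_def by (metis disjoint_iff hd_in_set in_mono)
  next
    assume "q \<subseteq> F"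
    then show ?thesis unfolding separates_def AB_path_def dpath_def by (metis disjoint_iff last_in_set in_mono)
  qed
  then show "\<exists>Y. finite Y \<and> Y \<subseteq> V \<and> separates E Y p q" using assms by blast
qed

lemma cls_fin_part:
  assumes "finite F" "F \<subseteq> V" "u \<in> V"
  shows "cls (fin_part V F) u = (if u \<in> F then {u} else V - F)"
  using assms by (intro admissible_cls_eq[OF admissible_fin_part]) (auto simp: fin_part_def)

lemma admissible_meet_part:
  assumes P: "admissible V E P" and Q: "admissible V E Q"
  shows "admissible V E (meet_part P Q)"
  unfolding admissible_def
proof (intro conjI ballI impI)
  have "meet_part P Q \<subseteq> (\<lambda>(p, q). p \<inter> q) ` (P \<times> Q)" by (auto simp: meet_part_def)
  then show "finite (meet_part P Q)"
    using admissible_finite[OF P] admissible_finite[OF Q] by (meson finite_SigmaI finite_imageI finite_subset)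
  show "\<Union> (meet_part P Q) = V"
  proof
    show "\<Union> (meet_part P Q) \<subseteq> V" using admissible_Union[OF P] by (auto simp: meet_part_def)
    show "V \<subseteq> \<Union> (meet_part P Q)"
    proof
      fix v assume "v \<in> V"
      then have "v \<in> cls P v \<inter> cls Q v" "cls P v \<in> P" "cls Q v \<in> Q"
        using admissible_cls[OF P] admissible_cls[OF Q] by auto
      then show "v \<in> \<Union> (meet_part P Q)" unfolding meet_part_def by blast
    qed
  qed
  show "{} \<notin> meet_part P Q" by (auto simp: meet_part_def)
  fix a b assume ab: "a \<in> meet_part P Q" "b \<in> meet_part P Q" "a \<noteq> b"
  then obtain p q p' q' where pq: "a = p \<inter> q" "b = p' \<inter> q'" "p \<in> P" "q \<in> Q" "p' \<in> P" "q' \<in> Q"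
    by (auto simp: meet_part_def)
  show "a \<inter> b = {}"
  proof (rule ccontr)
    assume "a \<inter> b \<noteq> {}"
    then obtain v where "v \<in> a" "v \<in> b" by blast
    then have "p = p'" "q = q'" using pq admissible_disjoint[OF P] admissible_disjoint[OF Q] by blast+
    then show False using ab pq by simp
  qed
  have "p \<noteq> p' \<or> q \<noteq> q'" using ab pq by auto
  then show "\<exists>Y. finite Y \<and> Y \<subseteq> V \<and> separates E Y a b"
  proof
    assume "p \<noteq> p'"
    then obtain Y where "finite Y" "Y \<subseteq> V" "separates E Y p p'" using admissible_separates[OF P] pq by blast
    then show ?thesis using separates_mono[of E Y p p' a b] pq by blast
  next
    assume "q \<noteq> q'"
    then obtain Y where "finite Y" "Y \<subseteq> V" "separates E Y q q'" using admissible_separates[OF Q] pq by blast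
    then show ?thesis using separates_mono[of E Y q q' a b] pq by blast
  qed
qed

lemma refines_le_meet_part:
  shows "refines_le P (meet_part P Q)" "refines_le Q (meet_part P Q)"
  unfolding refines_le_def meet_part_def by blast+

lemma refines_le_trans: "refines_le P Q \<Longrightarrow> refines_le Q R \<Longrightarrow> refines_le P R"
  unfolding refines_le_def by (meson order_trans)

lemma adm_parts_directed:
  assumes "finite J" "J \<subseteq> adm_parts V E"
  shows "\<exists>Q \<in> adm_parts V E. \<forall>P\<in>J. refines_le P Q"
  using assms
proof (induction J rule: finite_induct)
  case empty
  show ?case using admissible_fin_part[of "{}" V E] by (auto simp: adm_parts_def)
next
  case (insert P J)
  then obtain Q where Q: "Q \<in> adm_parts V E" "\<forall>P\<in>J. refines_le P Q" by auto
  have "meet_part P Q \<in> adm_parts V E"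
    using insert.prems Q(1) admissible_meet_part by (auto simp: adm_parts_def)
  moreover have "\<forall>P'\<in>insert P J. refines_le P' (meet_part P Q)"
    using Q(2) refines_le_meet_part[where P = P and Q = Q] refines_le_trans[of _ Q "meet_part P Q"] by auto
  ultimately show ?case by blast
qed


section \<open>Quotient digraphs\<close>

lemma QuotE_in_qedges_iff [simp]:
  "QuotE p q \<in> qedges E P \<longleftrightarrow> p \<in> P \<and> q \<in> P \<and> p \<noteq> q \<and> infinite (edges_between E p q)"
  by (simp add: qedges_def)

lemma OrigE_in_qedges_iff [simp]:
  "OrigE e \<in> qedges E P \<longleftrightarrow>
     e \<in> E \<and> cls P (fst e) \<noteq> cls P (snd e) \<and> finite (edges_between E (cls P (fst e)) (cls P (snd e)))"
  by (cases e) (auto simp: qedges_def)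

lemma edges_between_mono: "p \<subseteq> p' \<Longrightarrow> q \<subseteq> q' \<Longrightarrow> edges_between E p q \<subseteq> edges_between E p' q'"
  unfolding edges_between_def by auto

lemma CV_in_topspace_dtop [simp]: "CV v \<in> topspace (dtop V E) \<longleftrightarrow> v \<in> V"
  and CE_in_topspace_dtop [simp]: "CE e x \<in> topspace (dtop V E) \<longleftrightarrow> e \<in> E \<and> 0 < x \<and> x < 1"
  and CV_in_topspace_quot_top [simp]: "CV p \<in> topspace (quot_top E P) \<longleftrightarrow> p \<in> P"
  and CE_in_topspace_quot_top [simp]:
    "CE e' x \<in> topspace (quot_top E P) \<longleftrightarrow> e' \<in> qedges E P \<and> 0 < x \<and> x < 1"
  by (simp_all add: dtop_def quot_top_def)

lemma Hausdorff_space_quot_top: "Hausdorff_space (quot_top E P)"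
  unfolding quot_top_def by (rule Hausdorff_space_complex_top)

definition phi_edge :: "('v \<times> 'v) set \<Rightarrow> 'v set set \<Rightarrow> 'v \<times> 'v \<Rightarrow> 'v qedge" where
  "phi_edge E P e =
     (if QuotE (cls P (fst e)) (cls P (snd e)) \<in> qedges E P
      then QuotE (cls P (fst e)) (cls P (snd e)) else OrigE e)"

definition bond_edge :: "('v \<times> 'v) set \<Rightarrow> 'v set set \<Rightarrow> 'v set set \<Rightarrow> 'v qedge \<Rightarrow> 'v qedge" where
  "bond_edge E P' P e' =
     (if QuotE (up P (qsrc P' e')) (up P (qtgt P' e')) \<in> qedges E P
      then QuotE (up P (qsrc P' e')) (up P (qtgt P' e')) else e')"

lemma phi_CE [simp]:
  "phi E P (CE e x) =
     (if cls P (fst e) = cls P (snd e) then CV (cls P (fst e)) else CE (phi_edge E P e) x)"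
  by (simp add: Let_def phi_edge_def)

lemma bond_CE [simp]:
  "bond E P' P (CE e' x) =
     (if up P (qsrc P' e') = up P (qtgt P' e') then CV (up P (qsrc P' e')) else CE (bond_edge E P' P e') x)"
  by (simp add: Let_def bond_edge_def)

declare phi.simps(2) [simp del] bond.simps(2) [simp del]

lemma phi_fin_part_CV:
  assumes "finite F" "F \<subseteq> V" "u \<in> F"
  shows "phi E (fin_part V F) (CV u) = CV {u}"
  using cls_fin_part[OF assms(1,2) subsetD[OF assms(2,3)]] assms(3) by simp

fun cpt_vertices :: "('v, 'v \<times> 'v) cpt \<Rightarrow> 'v set" where
  "cpt_vertices (CV v) = {v}"
| "cpt_vertices (CE e x) = {fst e, snd e}"

lemma Phi_eq: "Phi V E = (\<lambda>z. \<lambda>P\<in>adm_parts V E. phi E P z)"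
  by (rule ext) (simp add: Phi_def)

lemma invlim_top_eq:
  "invlim_top V E
     = subtopology (product_topology (quot_top E) (adm_parts V E)) (threads (adm_parts V E) refines_le (bond E))"
  by (simp add: invlim_top_def threads_def)

locale digraph =
  fixes V :: "'v set" and E :: "('v \<times> 'v) set"
  assumes edges_subset: "E \<subseteq> V \<times> V" and loop_free: "\<forall>v. (v, v) \<notin> E"
begin

lemma edge_ends: "e \<in> E \<Longrightarrow> fst e \<in> V" "e \<in> E \<Longrightarrow> snd e \<in> V"
  using edges_subset by auto

lemma edge_ends_distinct: "e \<in> E \<Longrightarrow> fst e \<noteq> snd e"
  using loop_free by (cases e) auto

lemma qedge_ends:
  assumes "admissible V E P" "e' \<in> qedges E P"
  shows "qsrc P e' \<in> P" "qtgt P e' \<in> P"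
  using assms by (cases e'; auto simp: admissible_cls edge_ends)+

lemma finite_qedges:
  assumes P: "admissible V E P"
  shows "finite (qedges E P)"
proof -
  let ?fin_edges = "\<Union>(p, q)\<in>P \<times> P. if finite (edges_between E p q) then edges_between E p q else {}"
  have "qedges E P \<subseteq> OrigE ` ?fin_edges \<union> (\<lambda>(p, q). QuotE p q) ` (P \<times> P)"
  proof
    fix e' assume e': "e' \<in> qedges E P"
    show "e' \<in> OrigE ` ?fin_edges \<union> (\<lambda>(p, q). QuotE p q) ` (P \<times> P)"
    proof (cases e')
      case (OrigE e)
      then have "e \<in> edges_between E (cls P (fst e)) (cls P (snd e))"
        "cls P (fst e) \<in> P" "cls P (snd e) \<in> P"
        using e' admissible_cls[OF P] edge_ends by (auto simp: edges_between_def)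
      then show ?thesis using e' OrigE by force
    qed (use e' in force)
  qed
  moreover have "finite ?fin_edges" using admissible_finite[OF P] by auto
  ultimately show ?thesis
    using admissible_finite[OF P] by (meson finite_SigmaI finite_Un finite_imageI finite_subset)
qed

lemma compact_space_quot_top: "admissible V E P \<Longrightarrow> compact_space (quot_top E P)"
  unfolding quot_top_def
  by (rule compact_space_complex_top) (auto simp: admissible_finite finite_qedges qedge_ends)

lemma phi_edge_in_qedges:
  assumes P: "admissible V E P" and "e \<in> E" and "cls P (fst e) \<noteq> cls P (snd e)"
  shows "phi_edge E P e \<in> qedges E P"
    "qsrc P (phi_edge E P e) = cls P (fst e)" "qtgt P (phi_edge E P e) = cls P (snd e)"
  using assms admissible_cls[OF P] edge_ends by (auto simp: phi_edge_def)

lemma continuous_map_phi: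
  assumes P: "admissible V E P"
  shows "continuous_map (dtop V E) (quot_top E P) (phi E P)"
  unfolding dtop_def quot_top_def
  by (rule continuous_map_complex_top_cellular[where fv = "cls P" and g = "phi_edge E P"])
     (use admissible_cls[OF P] edge_ends phi_edge_in_qedges[OF P] in auto)

lemma bond_edge_in_qedges:
  assumes P: "admissible V E P" and P': "admissible V E P'" and "refines_le P P'"
    and e': "e' \<in> qedges E P'" and ne: "up P (qsrc P' e') \<noteq> up P (qtgt P' e')"
  shows "bond_edge E P' P e' \<in> qedges E P"
    "qsrc P (bond_edge E P' P e') = up P (qsrc P' e')" "qtgt P (bond_edge E P' P e') = up P (qtgt P' e')"
proof -
  let ?p = "up P (qsrc P' e')" and ?q = "up P (qtgt P' e')"
  have ends: "?p \<in> P" "?q \<in> P" "qsrc P' e' \<subseteq> ?p" "qtgt P' e' \<subseteq> ?q"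
    using admissible_up[OF P P' \<open>refines_le P P'\<close>] qedge_ends[OF P' e'] by auto
  have "bond_edge E P' P e' \<in> qedges E P \<and> qsrc P (bond_edge E P' P e') = ?p \<and> qtgt P (bond_edge E P' P e') = ?q"
  proof (cases "QuotE ?p ?q \<in> qedges E P")
    case False
    then have fin: "finite (edges_between E ?p ?q)" using ends ne by auto
    show ?thesis
    proof (cases e')
      case (OrigE e)
      then have "?p = cls P (fst e)" "?q = cls P (snd e)"
        using e' up_cls[OF P P' \<open>refines_le P P'\<close>] edge_ends by auto
      then show ?thesis using False OrigE e' ne fin by (simp add: bond_edge_def)
    next
      case (QuotE q1 q2)
      text \<open>An infinite bundle of edges of D/P' stays infinite in the coarser D/P.\<close>
      then have "infinite (edges_between E q1 q2)" using e' by simp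
      moreover have "edges_between E q1 q2 \<subseteq> edges_between E ?p ?q"
        using ends QuotE by (intro edges_between_mono) auto
      ultimately show ?thesis using fin finite_subset by blast
    qed
  qed (simp add: bond_edge_def)
  then show "bond_edge E P' P e' \<in> qedges E P"
    "qsrc P (bond_edge E P' P e') = ?p" "qtgt P (bond_edge E P' P e') = ?q" by auto
qed

lemma continuous_map_bond:
  assumes P: "admissible V E P" and P': "admissible V E P'" and r: "refines_le P P'"
  shows "continuous_map (quot_top E P') (quot_top E P) (bond E P' P)"
  unfolding quot_top_def
  by (rule continuous_map_complex_top_cellular[where fv = "up P" and g = "bond_edge E P' P"])
     (use admissible_up[OF P P' r] qedge_ends[OF P'] bond_edge_in_qedges[OF P P' r] in auto)

lemma bond_edge_phi_edge:
  assumes P: "admissible V E P" and P': "admissible V E P'" and r: "refines_le P P'"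
    and e: "e \<in> E" and ne': "cls P' (fst e) \<noteq> cls P' (snd e)" and ne: "cls P (fst e) \<noteq> cls P (snd e)"
  shows "bond_edge E P' P (phi_edge E P' e) = phi_edge E P e"
proof -
  have src_tgt: "up P (qsrc P' (phi_edge E P' e)) = cls P (fst e)"
    "up P (qtgt P' (phi_edge E P' e)) = cls P (snd e)"
    using phi_edge_in_qedges[OF P' e ne'] up_cls[OF P P' r] edge_ends[OF e] by auto
  show ?thesis
  proof (cases "QuotE (cls P (fst e)) (cls P (snd e)) \<in> qedges E P")
    case False
    then have "finite (edges_between E (cls P (fst e)) (cls P (snd e)))"
      using ne admissible_cls[OF P] edge_ends[OF e] by auto
    moreover have "edges_between E (cls P' (fst e)) (cls P' (snd e))
        \<subseteq> edges_between E (cls P (fst e)) (cls P (snd e))"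
      using cls_refines[OF P P' r] edge_ends[OF e] by (intro edges_between_mono)
    ultimately have "QuotE (cls P' (fst e)) (cls P' (snd e)) \<notin> qedges E P'"
      using finite_subset by auto
    then show ?thesis
      using False unfolding bond_edge_def src_tgt by (simp add: phi_edge_def)
  qed (unfold bond_edge_def src_tgt, simp add: phi_edge_def)
qed

lemma bond_phi:
  assumes P: "admissible V E P" and P': "admissible V E P'" and r: "refines_le P P'"
    and z: "z \<in> topspace (dtop V E)"
  shows "bond E P' P (phi E P' z) = phi E P z"
proof (cases z)
  case (CV v)
  then show ?thesis using z up_cls[OF P P' r] by simp
next
  case (CE e x)
  then have e: "e \<in> E" using z by simp
  have up: "up P (cls P' (fst e)) = cls P (fst e)" "up P (cls P' (snd e)) = cls P (snd e)"
    using up_cls[OF P P' r] edge_ends[OF e] by auto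
  show ?thesis
  proof (cases "cls P' (fst e) = cls P' (snd e)")
    case True
    then show ?thesis using CE up by (metis bond.simps(1) phi.simps(1) phi_CE)
  next
    case False
    then show ?thesis
      using CE up phi_edge_in_qedges[OF P' e False] bond_edge_phi_edge[OF P P' r e False] by simp
  qed
qed

lemma phi_surjective:
  assumes P: "admissible V E P"
  shows "phi E P ` topspace (dtop V E) = topspace (quot_top E P)"
proof
  show "phi E P ` topspace (dtop V E) \<subseteq> topspace (quot_top E P)"
    using continuous_map_image_subset_topspace[OF continuous_map_phi[OF P]] .
  show "topspace (quot_top E P) \<subseteq> phi E P ` topspace (dtop V E)"
  proof
    fix y assume y: "y \<in> topspace (quot_top E P)"
    show "y \<in> phi E P ` topspace (dtop V E)"
    proof (cases y)
      case (CV p)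
      then have "p \<in> P" using y by simp
      then obtain v where "v \<in> p" using admissible_nonempty[OF P] by (metis ex_in_conv)
      then have "v \<in> V" "phi E P (CV v) = y"
        using \<open>p \<in> P\<close> CV admissible_Union[OF P] admissible_cls_eq[OF P] by auto
      then show ?thesis by (metis CV_in_topspace_dtop image_eqI)
    next
      case (CE e' x)
      then have e': "e' \<in> qedges E P" "0 < x" "x < 1" using y by auto
      show ?thesis
      proof (cases e')
        case (OrigE e)
        then have "phi E P (CE e x) = y" using CE e' by (simp add: phi_edge_def)
        then show ?thesis using e' OrigE by (intro image_eqI[where x = "CE e x"]) auto
      next
        case (QuotE p q)
        then have "p \<in> P" "q \<in> P" "p \<noteq> q" "infinite (edges_between E p q)" using e' by auto
        then obtain e where "e \<in> edges_between E p q" by (metis finite.emptyI ex_in_conv)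
        then have "e \<in> E" "cls P (fst e) = p" "cls P (snd e) = q"
          using \<open>p \<in> P\<close> \<open>q \<in> P\<close> admissible_cls_eq[OF P] by (auto simp: edges_between_def)
        then have "phi E P (CE e x) = y" using CE QuotE e' \<open>p \<noteq> q\<close> by (simp add: phi_edge_def)
        then show ?thesis using e' \<open>e \<in> E\<close> by (intro image_eqI[where x = "CE e x"]) auto
      qed
    qed
  qed
qed

lemma
  assumes F: "finite F" "F \<subseteq> V" and e: "e \<in> E" "fst e \<in> F" "snd e \<in> F"
  shows OrigE_in_qedges_fin_part: "OrigE e \<in> qedges E (fin_part V F)"
    and phi_fin_part_CE: "phi E (fin_part V F) (CE e x) = CE (OrigE e) x"
proof -
  have "cls (fin_part V F) (fst e) = {fst e}" "cls (fin_part V F) (snd e) = {snd e}"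
    using cls_fin_part[OF F] e edge_ends[OF e(1)] by auto
  moreover have "finite (edges_between E {fst e} {snd e})"
    by (rule finite_subset[of _ "{e}"]) (auto simp: edges_between_def)
  ultimately show "OrigE e \<in> qedges E (fin_part V F)" "phi E (fin_part V F) (CE e x) = CE (OrigE e) x"
    using e(1) edge_ends_distinct[OF e(1)] by (simp_all add: phi_edge_def)
qed

lemma inj_on_Phi: "inj_on (Phi V E) (topspace (dtop V E))"
  unfolding Phi_eq
proof (rule inj_onI)
  fix z1 z2 assume z: "z1 \<in> topspace (dtop V E)" "z2 \<in> topspace (dtop V E)"
    and eq: "(\<lambda>P\<in>adm_parts V E. phi E P z1) = (\<lambda>P\<in>adm_parts V E. phi E P z2)"
  define F where "F = cpt_vertices z1 \<union> cpt_vertices z2"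
  have F: "finite F" "F \<subseteq> V"
    using z by (cases z1; cases z2; auto simp: F_def edge_ends)+
  then have "fin_part V F \<in> adm_parts V E"
    by (simp add: adm_parts_def admissible_fin_part)
  then have "phi E (fin_part V F) z1 = phi E (fin_part V F) z2"
    using eq by (metis restrict_apply')
  moreover have phi_F: "phi E (fin_part V F) z = (case z of CV u \<Rightarrow> CV {u} | CE e x \<Rightarrow> CE (OrigE e) x)"
    if "z \<in> topspace (dtop V E)" "cpt_vertices z \<subseteq> F" for z
    using that phi_fin_part_CV[OF F] phi_fin_part_CE[OF F] by (cases z) auto
  ultimately have "(case z1 of CV u \<Rightarrow> CV {u} | CE e x \<Rightarrow> CE (OrigE e) x)
      = (case z2 of CV u \<Rightarrow> CV {u} | CE e x \<Rightarrow> CE (OrigE e) x)"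
    using phi_F[OF z(1)] phi_F[OF z(2)] by (simp add: F_def)
  then show "z1 = z2"
    by (cases z1; cases z2) auto
qed

lemma cstar_eq_phi_preimage:
  assumes v: "v \<in> V"
  defines "P \<equiv> fin_part V {v}"
  shows "cstar E fst snd v eps
       = {z \<in> topspace (dtop V E). phi E P z \<in> cstar (qedges E P) (qsrc P) (qtgt P) {v} eps}"
    (is "?L = ?R")
proof (rule set_eqI)
  have P: "admissible V E P" unfolding P_def using v by (intro admissible_fin_part) auto
  have cls_P: "cls P u = {v} \<longleftrightarrow> u = v" if "u \<in> V" for u
    using cls_fin_part[of "{v}" V u] that v by (auto simp: P_def)
  fix z
  show "z \<in> ?L \<longleftrightarrow> z \<in> ?R"
  proof (cases z)
    case (CV u)
    then show ?thesis using cls_P v by auto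
  next
    case (CE e x)
    show ?thesis
    proof (cases "e \<in> E \<and> 0 < x \<and> x < 1")
      case True
      then have "fst e \<in> V" "snd e \<in> V" "fst e \<noteq> snd e"
        using edge_ends edge_ends_distinct by auto
      then show ?thesis
        using CE True cls_P phi_edge_in_qedges[OF P, of e]
        by (cases "cls P (fst e) = cls P (snd e)") auto
    qed (use CE in auto)
  qed
qed

lemma edge_interval_eq_phi_preimage:
  assumes e: "e \<in> E" and "0 \<le> a" "b \<le> 1"
  defines "P \<equiv> fin_part V {fst e, snd e}"
  shows "{CE e x | x. a < x \<and> x < b}
       = {z \<in> topspace (dtop V E). phi E P z \<in> {CE (OrigE e) x | x. a < x \<and> x < b}}"
    (is "?L = ?R")
proof (rule set_eqI)
  have F: "finite {fst e, snd e}" "{fst e, snd e} \<subseteq> V" using edge_ends[OF e] by auto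
  fix z
  show "z \<in> ?L \<longleftrightarrow> z \<in> ?R"
  proof (cases z)
    case (CE e' x)
    show ?thesis
    proof (cases "e' = e")
      case True
      then show ?thesis using CE e \<open>0 \<le> a\<close> \<open>b \<le> 1\<close> phi_fin_part_CE[OF F e] by (auto simp: P_def)
    next
      case False
      then have "phi_edge E P e' \<noteq> OrigE e" by (simp add: phi_edge_def)
      then show ?thesis using CE False by auto
    qed
  qed auto
qed

lemma dtop_subbasis_initial:
  assumes "U \<in> complex_subbasis V E fst snd"
  shows "\<exists>P\<in>adm_parts V E. \<exists>W. openin (quot_top E P) W \<and> U = {z \<in> topspace (dtop V E). phi E P z \<in> W}"
  using assms unfolding complex_subbasis_def
proof (elim UnE CollectE exE conjE)
  fix v eps assume U: "U = cstar E fst snd v eps" and "v \<in> V" "0 < eps"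
  let ?P = "fin_part V {v}"
  have "?P \<in> adm_parts V E" "{v} \<in> ?P"
    using \<open>v \<in> V\<close> admissible_fin_part[of "{v}" V E] by (auto simp: adm_parts_def fin_part_def)
  then show ?thesis
    using cstar_eq_phi_preimage[OF \<open>v \<in> V\<close>, of eps] \<open>0 < eps\<close> U
    by (intro bexI[of _ ?P] exI[of _ "cstar (qedges E ?P) (qsrc ?P) (qtgt ?P) {v} eps"])
       (auto simp: quot_top_def intro!: openin_cstar)
next
  fix e a b assume U: "U = {CE e x | x. a < x \<and> x < b}" and e: "e \<in> E" and ab: "0 \<le> a" "a < b" "b \<le> 1"
  let ?P = "fin_part V {fst e, snd e}"
  have F: "finite {fst e, snd e}" "{fst e, snd e} \<subseteq> V" using edge_ends[OF e] by auto
  then have P: "?P \<in> adm_parts V E" by (simp add: adm_parts_def admissible_fin_part)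
  show ?thesis
    using OrigE_in_qedges_fin_part[OF F e] edge_interval_eq_phi_preimage[OF e \<open>0 \<le> a\<close> \<open>b \<le> 1\<close>] U P ab
    by (intro bexI[of _ ?P] exI[of _ "{CE (OrigE e) x | x. a < x \<and> x < b}"])
       (auto simp: quot_top_def intro!: openin_edge_interval)
qed

lemma compact_space_invlim_top: "compact_space (invlim_top V E)"
  unfolding invlim_top_eq
  by (rule compact_space_inverse_limit)
     (simp_all add: adm_parts_def compact_space_quot_top Hausdorff_space_quot_top continuous_map_bond)

lemma embedding_map_Phi: "embedding_map (dtop V E) (invlim_top V E) (Phi V E)"
proof -
  have "embedding_map (dtop V E) (product_topology (quot_top E) (adm_parts V E)) (Phi V E)"
    unfolding Phi_eq
    by (rule embedding_map_into_product_topology[OF _ _ inj_on_Phi[unfolded Phi_eq] dtop_subbasis_initial])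
       (use continuous_map_phi in \<open>simp_all add: dtop_def complex_top_eq adm_parts_def\<close>)
  moreover have "Phi V E ` topspace (dtop V E) \<subseteq> threads (adm_parts V E) refines_le (bond E)"
    unfolding Phi_eq by (auto intro!: restrict_in_threads simp: adm_parts_def bond_phi)
  ultimately show ?thesis
    unfolding invlim_top_eq embedding_map_in_subtopology by blast
qed

lemma closure_of_Phi_image:
  "invlim_top V E closure_of (Phi V E ` topspace (dtop V E)) = topspace (invlim_top V E)"
  unfolding invlim_top_eq Phi_eq
  by (intro dense_image_in_inverse_limit adm_parts_directed) (simp_all add: adm_parts_def bond_phi phi_surjective)

end

lemma Hausdorff_space_invlim_top: "Hausdorff_space (invlim_top V E)"
  unfolding invlim_top_eq
  by (simp add: Hausdorff_space_subtopology Hausdorff_space_product_topology Hausdorff_space_quot_top)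

theorem theorem4p1:
  fixes V :: "'v set" and E :: "('v \<times> 'v) set"
  assumes "E \<subseteq> V \<times> V" and "\<forall>v. (v, v) \<notin> E"
  shows "compact_space (invlim_top V E)
       \<and> Hausdorff_space (invlim_top V E)
       \<and> embedding_map (dtop V E) (invlim_top V E) (Phi V E)
       \<and> (invlim_top V E) closure_of (Phi V E ` topspace (dtop V E)) = topspace (invlim_top V E)"
proof -
  interpret digraph V E using assms by unfold_locales
  show ?thesis
    using compact_space_invlim_top Hausdorff_space_invlim_top embedding_map_Phi closure_of_Phi_image by blast
qed

end
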